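(* Let $(\mathfrak{g},f)$ be a factorizable Lie bialgebra. Put $\mathfrak{c}_1=\operatorname{Im}(f-1)$; then $\mathfrak{c}_1^\perp=\operatorname{Ker}f$, and $f$ induces an endomorphism $\tilde f$ of $\mathfrak{c}_1/\mathfrak{c}_1^\perp$ making $(\mathfrak{c}_1/\mathfrak{c}_1^\perp,\tilde f)$ a factorizable Lie bialgebra (with the form induced by $\kappa$). The map $\mathfrak{g}_f^{cop}\to\mathfrak{c}_1/\mathfrak{c}_1^\perp$, $x\mapsto (f-1)(x)+\mathfrak{c}_1^\perp$, is a surjective homomorphism of Lie bialgebras, with kernel $\operatorname{Ker}f+\operatorname{Ker}(f-1)$.
   Context: Let $\mathfrak{g}$ be a finite-dimensional complex Lie algebra with a nondegenerate invariant symmetric bilinear form $\kappa$; $\perp$ and adjoints $f^*$ are taken with respect to $\kappa$. A factorizable Lie bialgebra $(\mathfrak{g},f)$ is given by $f\in\operatorname{End}\mathfrak{g}$ with (i) $f+f^*=1$ and (ii) $[f(x),f(y)]=f([x,f(y)]+[f(x),y]-[x,y])$ for all $x,y$; its cobracket is $\delta(x)=[x\otimes1+1\otimes x,r]$ where $r=\sum_a x_a\otimes f(x^a)$ for any pair of $\kappa$-dual bases $(x_a),(x^a)$. $\mathfrak{g}_f$ denotes the dual Lie bialgebra $\mathfrak{g}^*$ transported to $\mathfrak{g}$ via $\kappa$: as a Lie algebra it is $\mathfrak{g}$ with bracket $[x,y]_f=[x,f(y)]+[f(x),y]-[x,y]$, and its cobracket is the transpose (via $\kappa$) of the bracket of $\mathfrak{g}$.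 For a Lie bialgebra $\mathfrak{l}$, $\mathfrak{l}^{cop}$ is $\mathfrak{l}$ with the same bracket and the negated cobracket. *)

theory Defs
  imports "HOL-Analysis.Analysis"
begin

text \<open>Elements of the
tensor square V (x) V of a finite-dimensional space are represented by their values on pairs
of linear functionals: the tensor sum_i a_i (x) b_i is the function
(alpha, beta) maps to sum_i alpha a_i * beta b_i.  Two tensors are equal iff these values agree
on all pairs of linear functionals.\<close>

type_synonym 'v functional = "'v \<Rightarrow> complex"
type_synonym 'v tensor2 = "'v functional \<Rightarrow> 'v functional \<Rightarrow> complex"

definition lin_functional :: "(complex \<Rightarrow> 'v::ab_group_add \<Rightarrow> 'v) \<Rightarrow> 'v functional \<Rightarrow> bool" where
  "lin_functional sc \<alpha> \<longleftrightarrow> Vector_Spaces.linear sc ((*) :: complex \<Rightarrow> complex \<Rightarrow> complex) \<alpha>"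

definition fin_dim_space :: "(complex \<Rightarrow> 'v::ab_group_add \<Rightarrow> 'v) \<Rightarrow> bool" where
  "fin_dim_space sc \<longleftrightarrow> (\<exists>B. finite_dimensional_vector_space sc B)"

definition lie_algebra :: "(complex \<Rightarrow> 'v::ab_group_add \<Rightarrow> 'v) \<Rightarrow> ('v \<Rightarrow> 'v \<Rightarrow> 'v) \<Rightarrow> bool" where
  "lie_algebra sc br \<longleftrightarrow> vector_space sc
     \<and> (\<forall>x. Vector_Spaces.linear sc sc (br x)) \<and> (\<forall>y. Vector_Spaces.linear sc sc (\<lambda>x. br x y))
     \<and> (\<forall>x. br x x = 0)
     \<and> (\<forall>x y z. br x (br y z) + br y (br z x) + br z (br x y) = 0)"

definition invariant_form :: "(complex \<Rightarrow> 'v::ab_group_add \<Rightarrow> 'v) \<Rightarrow> ('v \<Rightarrow> 'v \<Rightarrow> 'v)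
    \<Rightarrow> ('v \<Rightarrow> 'v \<Rightarrow> complex) \<Rightarrow> bool" where
  "invariant_form sc br \<kappa> \<longleftrightarrow>
     (\<forall>x. lin_functional sc (\<kappa> x))
     \<and> (\<forall>x y. \<kappa> x y = \<kappa> y x)
     \<and> (\<forall>x y z. \<kappa> (br x y) z = \<kappa> x (br y z))
     \<and> (\<forall>x. (\<forall>y. \<kappa> x y = 0) \<longrightarrow> x = 0)"

definition quadratic_lie_algebra :: "(complex \<Rightarrow> 'v::ab_group_add \<Rightarrow> 'v) \<Rightarrow> ('v \<Rightarrow> 'v \<Rightarrow> 'v)
    \<Rightarrow> ('v \<Rightarrow> 'v \<Rightarrow> complex) \<Rightarrow> bool" where
  "quadratic_lie_algebra sc br \<kappa> \<longleftrightarrow> fin_dim_space sc \<and> lie_algebra sc br \<and> invariant_form sc br \<kappa>"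

definition perp :: "('v::ab_group_add \<Rightarrow> 'v \<Rightarrow> complex) \<Rightarrow> 'v set \<Rightarrow> 'v set" where
  "perp \<kappa> S = {x. \<forall>y\<in>S. \<kappa> x y = 0}"

text \<open>Factorizable Lie bialgebra (g, f): conditions (i) f + f* = 1, written through kappa
(f* is the kappa-adjoint, kappa (f* x) y = kappa x (f y)), and (ii).\<close>
definition factorizable :: "(complex \<Rightarrow> 'v::ab_group_add \<Rightarrow> 'v) \<Rightarrow> ('v \<Rightarrow> 'v \<Rightarrow> 'v)
    \<Rightarrow> ('v \<Rightarrow> 'v \<Rightarrow> complex) \<Rightarrow> ('v \<Rightarrow> 'v) \<Rightarrow> bool" where
  "factorizable sc br \<kappa> f \<longleftrightarrow> quadratic_lie_algebra sc br \<kappa> \<and> Vector_Spaces.linear sc sc f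
     \<and> (\<forall>x y. \<kappa> (f x) y + \<kappa> x (f y) = \<kappa> x y)
     \<and> (\<forall>x y. br (f x) (f y) = f (br x (f y) + br (f x) y - br x y))"

definition dual_bases :: "(complex \<Rightarrow> 'v::ab_group_add \<Rightarrow> 'v) \<Rightarrow> ('v \<Rightarrow> 'v \<Rightarrow> complex)
    \<Rightarrow> 'v list \<Rightarrow> 'v list \<Rightarrow> bool" where
  "dual_bases sc \<kappa> xs ys \<longleftrightarrow> length xs = length ys
     \<and> module.span sc (set xs) = UNIV \<and> module.span sc (set ys) = UNIV
     \<and> (\<forall>i<length xs. \<forall>j<length ys. \<kappa> (xs ! i) (ys ! j) = (if i = j then 1 else 0))"

definition some_dual_bases :: "(complex \<Rightarrow> 'v::ab_group_add \<Rightarrow> 'v) \<Rightarrow> ('v \<Rightarrow> 'v \<Rightarrow> complex)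
    \<Rightarrow> 'v list \<times> 'v list" where
  "some_dual_bases sc \<kappa> = (SOME p. dual_bases sc \<kappa> (fst p) (snd p))"

text \<open>The r-matrix r = sum_a x_a (x) f(x^a).\<close>
definition r_matrix :: "(complex \<Rightarrow> 'v::ab_group_add \<Rightarrow> 'v) \<Rightarrow> ('v \<Rightarrow> 'v \<Rightarrow> complex)
    \<Rightarrow> ('v \<Rightarrow> 'v) \<Rightarrow> 'v tensor2" where
  "r_matrix sc \<kappa> f \<alpha> \<beta> =
     (let xs = fst (some_dual_bases sc \<kappa>); ys = snd (some_dual_bases sc \<kappa>)
      in (\<Sum>a<length xs. \<alpha> (xs ! a) * \<beta> (f (ys ! a))))"

text \<open>Cobracket delta(x) = [x (x) 1 + 1 (x) x, r] = (ad_x (x) 1 + 1 (x) ad_x) r.\<close>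
definition cobracket :: "(complex \<Rightarrow> 'v::ab_group_add \<Rightarrow> 'v) \<Rightarrow> ('v \<Rightarrow> 'v \<Rightarrow> 'v)
    \<Rightarrow> ('v \<Rightarrow> 'v \<Rightarrow> complex) \<Rightarrow> ('v \<Rightarrow> 'v) \<Rightarrow> 'v \<Rightarrow> 'v tensor2" where
  "cobracket sc br \<kappa> f x \<alpha> \<beta> =
     r_matrix sc \<kappa> f (\<lambda>v. \<alpha> (br x v)) \<beta> + r_matrix sc \<kappa> f \<alpha> (\<lambda>v. \<beta> (br x v))"

definition bracket_f :: "('v::ab_group_add \<Rightarrow> 'v \<Rightarrow> 'v) \<Rightarrow> ('v \<Rightarrow> 'v) \<Rightarrow> 'v \<Rightarrow> 'v \<Rightarrow> 'v" where
  "bracket_f br f x y = br x (f y) + br (f x) y - br x y"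

text \<open>Cobracket of g_f: transpose via kappa of the bracket of g, i.e. the unique tensor
delta_f(x) with (kappa (x) kappa)(delta_f(x), y (x) z) = kappa x [y,z]; in dual bases
delta_f(x) = sum_{a,b} kappa x [x_a, x_b] x^a (x) x^b.\<close>
definition cobracket_f :: "(complex \<Rightarrow> 'v::ab_group_add \<Rightarrow> 'v) \<Rightarrow> ('v \<Rightarrow> 'v \<Rightarrow> 'v)
    \<Rightarrow> ('v \<Rightarrow> 'v \<Rightarrow> complex) \<Rightarrow> 'v \<Rightarrow> 'v tensor2" where
  "cobracket_f sc br \<kappa> x \<alpha> \<beta> =
     (let xs = fst (some_dual_bases sc \<kappa>); ys = snd (some_dual_bases sc \<kappa>)
      in (\<Sum>a<length xs. \<Sum>b<length xs. \<kappa> x (br (xs ! a) (xs ! b)) * \<alpha> (ys ! a) * \<beta> (ys ! b)))"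

text \<open>The pushforward (phi (x) phi) t evaluated at
(alpha, beta) is t (alpha o phi) (beta o phi).\<close>
definition lie_bialg_hom :: "(complex \<Rightarrow> 'v::ab_group_add \<Rightarrow> 'v) \<Rightarrow> (complex \<Rightarrow> 'w::ab_group_add \<Rightarrow> 'w)
    \<Rightarrow> ('v \<Rightarrow> 'v \<Rightarrow> 'v) \<Rightarrow> ('v \<Rightarrow> 'v tensor2) \<Rightarrow> ('w \<Rightarrow> 'w \<Rightarrow> 'w) \<Rightarrow> ('w \<Rightarrow> 'w tensor2)
    \<Rightarrow> ('v \<Rightarrow> 'w) \<Rightarrow> bool" where
  "lie_bialg_hom sc1 sc2 br1 d1 br2 d2 \<phi> \<longleftrightarrow> Vector_Spaces.linear sc1 sc2 \<phi>
     \<and> (\<forall>x y. \<phi> (br1 x y) = br2 (\<phi> x) (\<phi> y))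
     \<and> (\<forall>x \<alpha> \<beta>. lin_functional sc2 \<alpha> \<longrightarrow> lin_functional sc2 \<beta> \<longrightarrow>
          d1 x (\<lambda>v. \<alpha> (\<phi> v)) (\<lambda>v. \<beta> (\<phi> v)) = d2 (\<phi> x) \<alpha> \<beta>)"

definition cop :: "('v \<Rightarrow> 'v tensor2) \<Rightarrow> 'v \<Rightarrow> 'v tensor2" where
  "cop d x \<alpha> \<beta> = - d x \<alpha> \<beta>"

end

theory Submission
  imports Defs
begin

(* Condition (i) says that the kappa-adjoint of f - 1 is -f, so c1 = Im (f - 1) has orthogonal
   complement Ker f.  Condition (ii) says (f - 1)[x,y]_f = [(f - 1)x, (f - 1)y]; hence c1 is a
   subalgebra, f - 1 carries the bracket of g_f to that of g, and Ker f is an ideal of c1.  So the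
   bracket, the form and f descend to c1 / Ker f, where the form becomes nondegenerate and (i),
   (ii) persist.  Both cobrackets are computed through Riesz representatives: if a functional on
   the quotient is represented by the class of c, then its pullback along f - 1 is represented by
   -f c.  Compatibility with the cobrackets thereby becomes the identity
   kappa (f [c,e]) d + kappa [e, f c] d = - kappa x [f c, f d] for e = (f - 1)x, which follows
   from invariance, (i) and (ii); its sign is the reason for the co-opposite.  Finally (f - 1)x
   lies in Ker f iff f (f x) = f x, i.e. iff x is in Ker f + Ker (f - 1). *)

section \<open>Nondegenerate symmetric forms and Riesz representatives\<close>

locale nondegenerate_form = vector_space sc
  for sc :: "complex \<Rightarrow> 'v::ab_group_add \<Rightarrow> 'v" +
  fixes \<kappa> :: "'v \<Rightarrow> 'v \<Rightarrow> complex"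
  assumes finite_dim: "fin_dim_space sc"
    and lin_functional_form: "lin_functional sc (\<kappa> x)"
    and form_commute: "\<kappa> x y = \<kappa> y x"
    and form_nondegenerate: "(\<And>y. \<kappa> x y = 0) \<Longrightarrow> x = 0"
begin

lemma module_hom_form_right: "module_hom sc (*) (\<kappa> x)"
  using lin_functional_form unfolding lin_functional_def by (rule module_hom_linearI)

lemma module_hom_form_left: "module_hom sc (*) (\<lambda>y. \<kappa> y x)"
  using module_hom_form_right[of x] by (subst form_commute)

lemmas form_add_right = module_hom.add[OF module_hom_form_right]
  and form_scale_right = module_hom.scale[OF module_hom_form_right]
  and form_zero_right = module_hom.zero[OF module_hom_form_right]
  and form_diff_right = module_hom.diff[OF module_hom_form_right]
  and form_neg_right = module_hom.neg[OF module_hom_form_right]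
  and form_sum_right = module_hom.sum[OF module_hom_form_right]
  and form_add_left = module_hom.add[OF module_hom_form_left]
  and form_scale_left = module_hom.scale[OF module_hom_form_left]
  and form_zero_left = module_hom.zero[OF module_hom_form_left]
  and form_diff_left = module_hom.diff[OF module_hom_form_left]
  and form_neg_left = module_hom.neg[OF module_hom_form_left]
  and form_sum_left = module_hom.sum[OF module_hom_form_left]

lemmas form_simps = form_add_right form_scale_right form_zero_right form_diff_right
  form_neg_right form_sum_right form_add_left form_scale_left form_zero_left form_diff_left
  form_neg_left form_sum_left

lemma form_eqI: "(\<And>v. \<kappa> v a = \<kappa> v b) \<Longrightarrow> a = b"
  using form_nondegenerate[of "a - b"] by (simp add: form_commute[of "a - b"] form_diff_right)

lemma form_eq_0_on_span: "(\<And>z. z \<in> S \<Longrightarrow> \<kappa> w z = 0) \<Longrightarrow> v \<in> span S \<Longrightarrow> \<kappa> w v = 0"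
  by (rule module_hom.eq_0_on_span[OF module_hom_form_right])

lemma dual_family_expansion:
  assumes "finite I" and span: "span (y ` I) = UNIV"
    and dual: "\<And>i j. i \<in> I \<Longrightarrow> j \<in> I \<Longrightarrow> \<kappa> (x i) (y j) = (if i = j then 1 else 0)"
  shows "v = (\<Sum>i\<in>I. sc (\<kappa> v (y i)) (x i))"
proof -
  define w where "w = v - (\<Sum>i\<in>I. sc (\<kappa> v (y i)) (x i))"
  have "\<kappa> w (y j) = 0" if "j \<in> I" for j
  proof -
    have "(\<Sum>i\<in>I. \<kappa> v (y i) * \<kappa> (x i) (y j)) = (\<Sum>i\<in>I. if i = j then \<kappa> v (y j) else 0)"
      by (rule sum.cong) (simp_all add: dual that)
    also have "\<dots> = \<kappa> v (y j)"
      using \<open>finite I\<close> that by simp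
    finally show ?thesis
      unfolding w_def by (simp add: form_simps)
  qed
  then have "\<kappa> w z = 0" for z
    using form_eq_0_on_span[of "y ` I" w z] span by auto
  then have "w = 0"
    by (rule form_nondegenerate)
  then show ?thesis
    unfolding w_def by simp
qed

lemma dual_bases_swap: "dual_bases sc \<kappa> xs ys \<Longrightarrow> dual_bases sc \<kappa> ys xs"
  unfolding dual_bases_def by (metis form_commute)

lemma dual_bases_expansion:
  assumes "dual_bases sc \<kappa> xs ys"
  shows "v = (\<Sum>a<length xs. sc (\<kappa> v (ys ! a)) (xs ! a))"
proof (rule dual_family_expansion)
  have "(!) ys ` {..<length xs} = set ys"
    using assms by (simp add: dual_bases_def lessThan_atLeast0 nth_image)
  then show "span ((!) ys ` {..<length xs}) = UNIV"
    using assms by (simp add: dual_bases_def)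
qed (use assms in \<open>auto simp: dual_bases_def\<close>)

lemma dual_bases_riesz:
  assumes "dual_bases sc \<kappa> xs ys" and l: "lin_functional sc l"
  shows "l v = \<kappa> v (\<Sum>a<length xs. sc (l (xs ! a)) (ys ! a))"
proof -
  interpret l: module_hom sc "(*)" l
    using l unfolding lin_functional_def by (rule module_hom_linearI)
  have "l v = l (\<Sum>a<length xs. sc (\<kappa> v (ys ! a)) (xs ! a))"
    by (rule arg_cong[where f = l], rule dual_bases_expansion[OF assms(1)])
  also have "\<dots> = \<kappa> v (\<Sum>a<length xs. sc (l (xs ! a)) (ys ! a))"
    by (simp add: l.sum l.scale form_simps mult.commute)
  finally show ?thesis .
qed

(* The coordinate map v \<mapsto> (kappa b v)_b is injective by nondegeneracy, hence surjective;
   preimages of the basis vectors form the dual family. *)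
lemma exists_dual_family:
  assumes "finite_dimensional_vector_space sc B"
  obtains y where "\<And>b b'. b \<in> B \<Longrightarrow> b' \<in> B \<Longrightarrow> \<kappa> b' (y b) = (if b' = b then 1 else 0)"
proof -
  interpret B: finite_dimensional_vector_space sc B by fact
  have coeffs_zero: "u b = 0" if "(\<Sum>b\<in>B. sc (u b) b) = 0" "b \<in> B" for u b
    using that B.independent_Basis dependent_finite B.finite_Basis by blast
  define T where "T v = (\<Sum>b\<in>B. sc (\<kappa> b v) b)" for v
  have T_linear: "Vector_Spaces.linear sc sc T"
    unfolding Vector_Spaces.linear_iff T_def
    by (simp add: vector_space_axioms form_simps scale_left_distrib sum.distrib scale_sum_right)
  have "v = 0" if "T v = 0" for v
  proof (rule form_nondegenerate)
    fix z
    have "\<kappa> b v = 0" if "b \<in> B" for b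
      using coeffs_zero[of "\<lambda>b. \<kappa> b v"] \<open>T v = 0\<close> that unfolding T_def by blast
    then show "\<kappa> v z = 0"
      using form_eq_0_on_span[of B v z] B.span_Basis by (simp add: form_commute)
  qed
  then have "inj T"
    using module_hom.inj_iff_eq_0[OF module_hom_linearI[OF T_linear]] by blast
  then obtain y where y: "\<And>b. T (y b) = b"
    using B.linear_inj_imp_surj[OF T_linear] by (metis surjD)
  have "\<kappa> b' (y b) = (if b' = b then 1 else 0)" if "b \<in> B" "b' \<in> B" for b b'
  proof -
    have "(\<Sum>v\<in>B. sc (if v = b then 1 else 0) v) = (\<Sum>v\<in>B. if v = b then v else 0)"
      by (rule sum.cong) auto
    also have "\<dots> = b"
      using that B.finite_Basis by simp
    finally have "(\<Sum>v\<in>B. sc (\<kappa> v (y b) - (if v = b then 1 else 0)) v) = 0"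
      using y[of b] unfolding T_def by (simp add: scale_left_diff_distrib sum_subtractf)
    then show ?thesis
      using coeffs_zero that(2) by fastforce
  qed
  then show thesis
    by (rule that)
qed

lemma dual_bases_exist: "\<exists>xs ys. dual_bases sc \<kappa> xs ys"
proof -
  obtain B where B: "finite_dimensional_vector_space sc B"
    using finite_dim unfolding fin_dim_space_def by blast
  then interpret B: finite_dimensional_vector_space sc B .
  obtain y where dual: "\<And>b b'. b \<in> B \<Longrightarrow> b' \<in> B \<Longrightarrow> \<kappa> b' (y b) = (if b' = b then 1 else 0)"
    using exists_dual_family[OF B] by blast
  obtain xs where xs: "set xs = B" "distinct xs"
    using finite_distinct_list[OF B.finite_Basis] by blast
  have "v \<in> span (y ` B)" for v
  proof -
    have "v = (\<Sum>b\<in>B. sc (\<kappa> v b) (y b))"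
      by (rule dual_family_expansion) (auto simp: B.finite_Basis B.span_Basis dual form_commute)
    also have "\<dots> \<in> span (y ` B)"
      by (intro span_sum span_scale span_base) simp
    finally show ?thesis .
  qed
  then have "dual_bases sc \<kappa> xs (map y xs)"
    unfolding dual_bases_def using xs B.span_Basis
    by (auto simp: dual form_commute nth_eq_iff_index_eq)
  then show ?thesis
    by blast
qed

lemma some_dual_bases: "dual_bases sc \<kappa> (fst (some_dual_bases sc \<kappa>)) (snd (some_dual_bases sc \<kappa>))"
proof -
  obtain xs ys where "dual_bases sc \<kappa> (fst (xs, ys)) (snd (xs, ys))"
    using dual_bases_exist by auto
  then show ?thesis
    unfolding some_dual_bases_def by (rule someI[where P = "\<lambda>p. dual_bases sc \<kappa> (fst p) (snd p)"])
qed

definition riesz :: "('v \<Rightarrow> complex) \<Rightarrow> 'v" where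
  "riesz l = (THE u. \<forall>v. l v = \<kappa> v u)"

lemma riesz_eqI: "(\<And>v. l v = \<kappa> v u) \<Longrightarrow> riesz l = u"
  unfolding riesz_def by (rule the_equality) (auto intro: form_eqI)

lemma dual_bases_riesz_eq:
  "dual_bases sc \<kappa> xs ys \<Longrightarrow> lin_functional sc l \<Longrightarrow> (\<Sum>a<length xs. sc (l (xs ! a)) (ys ! a)) = riesz l"
  using riesz_eqI[OF dual_bases_riesz] by (rule sym)

lemma lin_functional_riesz: "lin_functional sc l \<Longrightarrow> l v = \<kappa> v (riesz l)"
  using dual_bases_riesz[OF some_dual_bases] dual_bases_riesz_eq[OF some_dual_bases] by simp

end

section \<open>Factorizable Lie bialgebras\<close>

lemma lin_functional_comp:
  assumes "lin_functional s2 \<alpha>" and "Vector_Spaces.linear s1 s2 h"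
  shows "lin_functional s1 (\<lambda>v. \<alpha> (h v))"
  using Vector_Spaces.linear_compose[OF assms(2) assms(1)[unfolded lin_functional_def]]
  unfolding lin_functional_def o_def .

lemma fin_dim_space_surj_image:
  assumes "fin_dim_space s1" and h: "Vector_Spaces.linear s1 s2 h" and "surj h"
  shows "fin_dim_space s2"
proof -
  obtain B where "finite_dimensional_vector_space s1 B"
    using assms(1) unfolding fin_dim_space_def by blast
  then interpret V: finite_dimensional_vector_space s1 B .
  interpret h: Vector_Spaces.linear s1 s2 h by (fact h)
  have "UNIV \<subseteq> h.vs2.span (h ` B)"
    using h.spanning_surjective_image[OF _ \<open>surj h\<close>] V.span_Basis by simp
  moreover obtain B' where B': "B' \<subseteq> h ` B" "h.vs2.independent B'" "h ` B \<subseteq> h.vs2.span B'"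
    by (rule h.vs2.maximal_independent_subset)
  moreover have "h.vs2.span (h ` B) \<subseteq> h.vs2.span B'"
    using h.vs2.span_mono[OF B'(3)] by (simp add: h.vs2.span_span)
  ultimately have "h.vs2.span B' = UNIV"
    by blast
  moreover have "finite B'"
    using B'(1) V.finite_Basis finite_subset by blast
  ultimately have "finite_dimensional_vector_space s2 B'"
    using B'(2) h.vs2.vector_space_axioms
    by (simp add: finite_dimensional_vector_space_def finite_dimensional_vector_space_axioms_def)
  then show ?thesis
    unfolding fin_dim_space_def by blast
qed

locale factorizable_lie_bialgebra =
  fixes sc :: "complex \<Rightarrow> 'g::ab_group_add \<Rightarrow> 'g"
    and br :: "'g \<Rightarrow> 'g \<Rightarrow> 'g" and \<kappa> :: "'g \<Rightarrow> 'g \<Rightarrow> complex" and f :: "'g \<Rightarrow> 'g"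
  assumes factorizable: "factorizable sc br \<kappa> f"
begin

lemma lie_algebra: "lie_algebra sc br"
  and invariant_form: "invariant_form sc br \<kappa>"
  and linear_f: "Vector_Spaces.linear sc sc f"
  and f_plus_adjoint: "\<kappa> (f x) y + \<kappa> x (f y) = \<kappa> x y"
  and f_bracket: "br (f x) (f y) = f (bracket_f br f x y)"
  using factorizable unfolding factorizable_def quadratic_lie_algebra_def bracket_f_def by auto

sublocale nondegenerate_form sc \<kappa>
  using factorizable
  unfolding factorizable_def quadratic_lie_algebra_def lie_algebra_def invariant_form_def
  by (intro nondegenerate_form.intro nondegenerate_form_axioms.intro) auto

sublocale f: Vector_Spaces.linear sc sc f
  by (fact linear_f)

lemma bracket_self: "br x x = 0"
  and jacobi: "br x (br y z) + br y (br z x) + br z (br x y) = 0"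
  and linear_bracket_right: "Vector_Spaces.linear sc sc (br x)"
  and linear_bracket_left: "Vector_Spaces.linear sc sc (\<lambda>y. br y x)"
  using lie_algebra unfolding lie_algebra_def by auto

lemma module_hom_bracket_right: "module_hom sc sc (br x)"
  and module_hom_bracket_left: "module_hom sc sc (\<lambda>y. br y x)"
  using linear_bracket_right linear_bracket_left by (auto intro: module_hom_linearI)

lemma form_invariant: "\<kappa> (br x y) z = \<kappa> x (br y z)"
  using invariant_form unfolding invariant_form_def by blast

lemmas bracket_add_right = module_hom.add[OF module_hom_bracket_right]
  and bracket_scale_right = module_hom.scale[OF module_hom_bracket_right]
  and bracket_zero_right = module_hom.zero[OF module_hom_bracket_right]
  and bracket_diff_right = module_hom.diff[OF module_hom_bracket_right]
  and bracket_neg_right = module_hom.neg[OF module_hom_bracket_right]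
  and bracket_sum_right = module_hom.sum[OF module_hom_bracket_right]
  and bracket_add_left = module_hom.add[OF module_hom_bracket_left]
  and bracket_scale_left = module_hom.scale[OF module_hom_bracket_left]
  and bracket_diff_left = module_hom.diff[OF module_hom_bracket_left]
  and bracket_neg_left = module_hom.neg[OF module_hom_bracket_left]
  and bracket_sum_left = module_hom.sum[OF module_hom_bracket_left]

lemma bracket_antisym: "br x y = - br y x"
proof -
  have "0 = br (x + y) (x + y)"
    by (simp add: bracket_self)
  also have "\<dots> = br x x + br x y + (br y x + br y y)"
    by (simp only: bracket_add_left bracket_add_right add_ac)
  also have "\<dots> = br x y + br y x"
    by (simp add: bracket_self)
  finally show ?thesis
    by (metis eq_neg_iff_add_eq_0)
qed

definition c1 :: "'g set" where
  "c1 = range (\<lambda>x. f x - x)"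

lemma f_minus_id_in_c1: "f x - x \<in> c1"
  unfolding c1_def by (rule rangeI)

lemma c1_cases:
  assumes "x \<in> c1"
  obtains a where "x = f a - a"
  using assms unfolding c1_def by blast

lemma linear_f_minus_id: "Vector_Spaces.linear sc sc (\<lambda>x. f x - x)"
  by (simp add: Vector_Spaces.linear_iff f.diff f.scale f.add scale_right_diff_distrib
      vector_space_axioms)

lemma subspace_c1: "subspace c1"
  unfolding c1_def
  using module_hom.subspace_image[OF module_hom_linearI[OF linear_f_minus_id] subspace_UNIV] .

lemma form_f_minus_id: "\<kappa> (f x - x) y = - \<kappa> x (f y)"
  using f_plus_adjoint[of x y] by (simp add: form_diff_left algebra_simps)

lemma perp_c1: "perp \<kappa> c1 = {x. f x = 0}"
proof -
  have "\<kappa> x (f y - y) = - \<kappa> (f x) y" for x y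
    by (metis form_commute form_f_minus_id)
  then have "x \<in> perp \<kappa> c1 \<longleftrightarrow> (\<forall>y. \<kappa> (f x) y = 0)" for x
    by (simp add: perp_def c1_def)
  moreover have "(\<forall>y. \<kappa> (f x) y = 0) \<longleftrightarrow> f x = 0" for x
    using form_nondegenerate[of "f x"] form_zero_left by auto
  ultimately show ?thesis
    by auto
qed

lemma f_image_c1: "x \<in> c1 \<Longrightarrow> f x \<in> c1"
  by (metis c1_cases f.diff f_minus_id_in_c1)

lemma f_minus_id_bracket_f: "f (bracket_f br f a b) - bracket_f br f a b = br (f a - a) (f b - b)"
proof -
  have "f (bracket_f br f a b) = br (f a) (f b)"
    by (simp add: f_bracket)
  then show ?thesis
    by (simp add: bracket_f_def bracket_diff_left bracket_diff_right algebra_simps)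
qed

lemma bracket_c1: "x \<in> c1 \<Longrightarrow> y \<in> c1 \<Longrightarrow> br x y \<in> c1"
  by (metis c1_cases f_minus_id_bracket_f f_minus_id_in_c1)

lemma form_bracket_rotate: "\<kappa> (br x y) z = \<kappa> y (br z x)"
  by (metis form_commute form_invariant)

lemma form_kernel_f_c1: "f k = 0 \<Longrightarrow> c \<in> c1 \<Longrightarrow> \<kappa> k c = 0"
  using perp_c1 unfolding perp_def by blast

lemma f_bracket_c1_kernel_f:
  assumes "c \<in> c1" and "f k = 0"
  shows "f (br c k) = 0"
proof -
  obtain a where a: "c = f a - a"
    using assms(1) by (rule c1_cases)
  have "bracket_f br f a k = br c k"
    unfolding bracket_f_def a using assms(2) by (simp add: bracket_diff_left bracket_zero_right)
  moreover have "f (bracket_f br f a k) = br (f a) (f k)"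
    by (simp add: f_bracket)
  ultimately show ?thesis
    using assms(2) by (simp add: bracket_zero_right)
qed

lemma f_bracket_kernel_f_c1: "c \<in> c1 \<Longrightarrow> f k = 0 \<Longrightarrow> f (br k c) = 0"
  using f_bracket_c1_kernel_f[of c k] by (simp add: bracket_antisym[of k] f.neg)

lemma f_bracket_cong:
  assumes "x \<in> c1" "y' \<in> c1" and "f x = f x'" "f y = f y'"
  shows "f (br x y) = f (br x' y')"
proof -
  have "br x y - br x' y' = br x (y - y') + br (x - x') y'"
    by (simp add: bracket_diff_left bracket_diff_right)
  moreover have "f (br x (y - y')) = 0" "f (br (x - x') y') = 0"
    using assms f_bracket_c1_kernel_f f_bracket_kernel_f_c1 by (simp_all add: f.diff)
  ultimately show ?thesis
    by (metis f.add f.diff add_0 eq_iff_diff_eq_0)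
qed

lemma form_cong:
  assumes "x \<in> c1" "y' \<in> c1" and "f x = f x'" "f y = f y'"
  shows "\<kappa> x y = \<kappa> x' y'"
proof -
  have "\<kappa> x y - \<kappa> x' y' = \<kappa> (y - y') x + \<kappa> (x - x') y'"
    by (simp add: form_diff_left form_diff_right form_commute[of x])
  moreover have "\<kappa> (y - y') x = 0" "\<kappa> (x - x') y' = 0"
    using assms by (simp_all add: form_kernel_f_c1 f.diff)
  ultimately show ?thesis
    by simp
qed

lemma r_matrix_eq:
  assumes "lin_functional sc \<alpha>" and \<beta>: "lin_functional sc \<beta>"
  shows "r_matrix sc \<kappa> f \<alpha> \<beta> = \<beta> (f (riesz \<alpha>))"
proof -
  define xs where "xs = fst (some_dual_bases sc \<kappa>)"
  define ys where "ys = snd (some_dual_bases sc \<kappa>)"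
  interpret \<beta>f: module_hom sc "(*)" "\<lambda>v. \<beta> (f v)"
    using lin_functional_comp[OF \<beta> linear_f] unfolding lin_functional_def by (rule module_hom_linearI)
  have "\<beta> (f (riesz \<alpha>)) = \<beta> (f (\<Sum>a<length xs. sc (\<alpha> (xs ! a)) (ys ! a)))"
    using dual_bases_riesz_eq[OF some_dual_bases assms(1)] unfolding xs_def ys_def by simp
  also have "\<dots> = (\<Sum>a<length xs. \<alpha> (xs ! a) * \<beta> (f (ys ! a)))"
    by (simp add: \<beta>f.sum \<beta>f.scale)
  finally show ?thesis
    unfolding r_matrix_def xs_def ys_def Let_def by simp
qed

lemma riesz_comp_bracket:
  assumes "lin_functional sc \<alpha>"
  shows "riesz (\<lambda>v. \<alpha> (br y v)) = br (riesz \<alpha>) y"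
proof (rule riesz_eqI)
  fix v
  have "\<alpha> (br y v) = \<kappa> (br y v) (riesz \<alpha>)"
    by (rule lin_functional_riesz[OF assms])
  also have "\<dots> = \<kappa> v (br (riesz \<alpha>) y)"
    by (rule form_bracket_rotate)
  finally show "\<alpha> (br y v) = \<kappa> v (br (riesz \<alpha>) y)" .
qed

lemma cobracket_eq:
  assumes \<alpha>: "lin_functional sc \<alpha>" and \<beta>: "lin_functional sc \<beta>"
  shows "cobracket sc br \<kappa> f x \<alpha> \<beta> = \<beta> (f (br (riesz \<alpha>) x)) + \<beta> (br x (f (riesz \<alpha>)))"
  unfolding cobracket_def
  using r_matrix_eq[OF lin_functional_comp[OF \<alpha> linear_bracket_right] \<beta>]
    r_matrix_eq[OF \<alpha> lin_functional_comp[OF \<beta> linear_bracket_right]]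
  by (simp add: riesz_comp_bracket[OF \<alpha>])

lemma cobracket_f_eq:
  assumes l: "lin_functional sc l" and m: "lin_functional sc m"
  shows "cobracket_f sc br \<kappa> x l m = \<kappa> x (br (riesz l) (riesz m))"
proof -
  define xs where "xs = fst (some_dual_bases sc \<kappa>)"
  define ys where "ys = snd (some_dual_bases sc \<kappa>)"
  have dual: "dual_bases sc \<kappa> ys xs"
    unfolding xs_def ys_def by (rule dual_bases_swap[OF some_dual_bases])
  then have "length ys = length xs"
    unfolding dual_bases_def by simp
  then have "riesz l = (\<Sum>a<length xs. sc (l (ys ! a)) (xs ! a))"
    "riesz m = (\<Sum>b<length xs. sc (m (ys ! b)) (xs ! b))"
    using dual_bases_riesz_eq[OF dual l] dual_bases_riesz_eq[OF dual m] by simp_all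
  then show ?thesis
    unfolding cobracket_f_def xs_def [symmetric] ys_def [symmetric] Let_def
    by (simp add: bracket_sum_left bracket_sum_right bracket_scale_left bracket_scale_right
        form_sum_right form_scale_right sum_distrib_left mult_ac)
      (rule sum.swap)
qed

(* The identity behind the compatibility of x \<mapsto> (f - 1)x with the cobrackets. *)
lemma cobracket_identity:
  "\<kappa> (f (br c (f x - x))) d + \<kappa> (br (f x - x) (f c)) d = - \<kappa> x (br (f c) (f d))"
proof -
  define e where "e = f x - x"
  have "\<kappa> (f (br c e)) d = \<kappa> (br c e) d - \<kappa> (br c e) (f d)"
    using f_plus_adjoint[of "br c e" d] by (simp add: algebra_simps)
  also have "\<dots> = \<kappa> e (br d c) - \<kappa> e (br (f d) c)"
    by (simp add: form_bracket_rotate)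
  finally have "\<kappa> (f (br c e)) d + \<kappa> (br e (f c)) d = \<kappa> e (br d c - br (f d) c + br (f c) d)"
    by (simp add: form_invariant form_add_right form_diff_right)
  also have "br d c - br (f d) c + br (f c) d = bracket_f br f c d"
    unfolding bracket_f_def using bracket_antisym[of d c] bracket_antisym[of "f d" c] by simp
  also have "\<kappa> e (bracket_f br f c d) = - \<kappa> x (br (f c) (f d))"
    unfolding e_def form_f_minus_id f_bracket ..
  finally show ?thesis
    unfolding e_def .
qed

lemma kernel_plus_fixed_points: "{a + b | a b. f a = 0 \<and> f b = b} = {x. f (f x) = f x}"
proof (intro set_eqI iffI)
  fix x
  assume "x \<in> {a + b | a b. f a = 0 \<and> f b = b}"
  then show "x \<in> {x. f (f x) = f x}"
    by (auto simp: f.add)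
next
  fix x
  assume "x \<in> {x. f (f x) = f x}"
  then have "x = (x - f x) + f x" "f (x - f x) = 0" "f (f x) = f x"
    by (simp_all add: f.diff)
  then show "x \<in> {a + b | a b. f a = 0 \<and> f b = b}"
    by blast
qed

end

section \<open>The quotient of c1 by its orthogonal complement\<close>

locale factorizable_quotient = factorizable_lie_bialgebra sc br \<kappa> f
  for sc :: "complex \<Rightarrow> 'g::ab_group_add \<Rightarrow> 'g" and br \<kappa> f +
  fixes scq :: "complex \<Rightarrow> 'q::ab_group_add \<Rightarrow> 'q" and \<pi> :: "'g \<Rightarrow> 'q"
  assumes vector_space_quotient: "vector_space scq"
    and linear_\<pi>: "Vector_Spaces.linear sc scq \<pi>"
    and \<pi>_c1_surj: "\<pi> ` c1 = UNIV"
    and \<pi>_c1_kernel: "\<forall>x\<in>c1. \<pi> x = 0 \<longleftrightarrow> x \<in> perp \<kappa> c1"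
begin

sublocale \<pi>: Vector_Spaces.linear sc scq \<pi>
  by (fact linear_\<pi>)

lemma \<pi>_eq_0_iff: "x \<in> c1 \<Longrightarrow> \<pi> x = 0 \<longleftrightarrow> f x = 0"
  using \<pi>_c1_kernel perp_c1 by blast

lemma \<pi>_eq_iff:
  assumes "x \<in> c1" "y \<in> c1"
  shows "\<pi> x = \<pi> y \<longleftrightarrow> f x = f y"
  using \<pi>_eq_0_iff[OF subspace_diff[OF subspace_c1 assms]] by (simp add: \<pi>.diff f.diff)

(* The quotient is given abstractly by \<pi>; its operations are defined through an arbitrary section
   of \<pi> over c1, and f_bracket_cong and form_cong make them independent of that choice. *)
definition lift :: "'q \<Rightarrow> 'g" where
  "lift u = (SOME x. x \<in> c1 \<and> \<pi> x = u)"

lemma lift_in_c1: "lift u \<in> c1" and \<pi>_lift: "\<pi> (lift u) = u"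
proof -
  have "u \<in> \<pi> ` c1"
    using \<pi>_c1_surj by simp
  then have "\<exists>x. x \<in> c1 \<and> \<pi> x = u"
    by blast
  then have "lift u \<in> c1 \<and> \<pi> (lift u) = u"
    unfolding lift_def by (rule someI_ex)
  then show "lift u \<in> c1" "\<pi> (lift u) = u"
    by auto
qed

lemma quotient_induct:
  assumes "\<And>a. a \<in> c1 \<Longrightarrow> P (\<pi> a)"
  shows "P u"
  using assms[OF lift_in_c1] by (simp only: \<pi>_lift)

lemma f_lift_\<pi>: "x \<in> c1 \<Longrightarrow> f (lift (\<pi> x)) = f x"
  using \<pi>_eq_iff[OF lift_in_c1, of x "\<pi> x"] by (simp add: \<pi>_lift)

definition brq :: "'q \<Rightarrow> 'q \<Rightarrow> 'q" where
  "brq u v = \<pi> (br (lift u) (lift v))"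

definition \<kappa>q :: "'q \<Rightarrow> 'q \<Rightarrow> complex" where
  "\<kappa>q u v = \<kappa> (lift u) (lift v)"

definition fq :: "'q \<Rightarrow> 'q" where
  "fq u = \<pi> (f (lift u))"

lemma brq_\<pi>:
  assumes "x \<in> c1" "y \<in> c1"
  shows "brq (\<pi> x) (\<pi> y) = \<pi> (br x y)"
  unfolding brq_def
  using f_bracket_cong[OF lift_in_c1 assms(2) f_lift_\<pi>[OF assms(1)] f_lift_\<pi>[OF assms(2)]]
  by (simp add: \<pi>_eq_iff lift_in_c1 bracket_c1 assms)

lemma \<kappa>q_\<pi>:
  assumes "x \<in> c1" "y \<in> c1"
  shows "\<kappa>q (\<pi> x) (\<pi> y) = \<kappa> x y"
  unfolding \<kappa>q_def by (rule form_cong[OF lift_in_c1 assms(2) f_lift_\<pi>[OF assms(1)] f_lift_\<pi>[OF assms(2)]])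

lemma fq_\<pi>: "x \<in> c1 \<Longrightarrow> fq (\<pi> x) = \<pi> (f x)"
  unfolding fq_def by (simp add: f_lift_\<pi>)

lemmas quotient_simps = brq_\<pi> \<kappa>q_\<pi> fq_\<pi>
  \<pi>.add[symmetric] \<pi>.scale[symmetric] \<pi>.diff[symmetric]
  subspace_add[OF subspace_c1] subspace_scale[OF subspace_c1] subspace_diff[OF subspace_c1]
  bracket_c1 f_image_c1

lemma quotient_lie_algebra: "lie_algebra scq brq"
proof -
  have "brq u (v + w) = brq u v + brq u w" "brq u (scq c v) = scq c (brq u v)"
    "brq (v + w) u = brq v u + brq w u" "brq (scq c v) u = scq c (brq v u)"
    "brq u u = 0" "brq u (brq v w) + brq v (brq w u) + brq w (brq u v) = 0" for u v w c
    by (induct u rule: quotient_induct; induct v rule: quotient_induct;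
        induct w rule: quotient_induct;
        simp add: quotient_simps bracket_add_left bracket_add_right bracket_scale_left
          bracket_scale_right bracket_self jacobi)+
  then show ?thesis
    unfolding lie_algebra_def Vector_Spaces.linear_iff using vector_space_quotient by blast
qed

lemma lin_functional_\<kappa>q: "lin_functional scq (\<kappa>q u)"
proof -
  have "\<kappa>q u (v + w) = \<kappa>q u v + \<kappa>q u w" "\<kappa>q u (scq c v) = c * \<kappa>q u v" for v w c
    by (induct u rule: quotient_induct; induct v rule: quotient_induct;
        induct w rule: quotient_induct; simp add: quotient_simps form_add_right form_scale_right)+
  then show ?thesis
    unfolding lin_functional_def Vector_Spaces.linear_iff
    using vector_space_quotient vector_space_over_itself.vector_space_axioms by blast
qed

lemma \<kappa>q_nondegenerate:
  assumes "\<And>v. \<kappa>q u v = 0"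
  shows "u = 0"
proof -
  have "\<kappa> (lift u) b = 0" if "b \<in> c1" for b
    using assms[of "\<pi> b"] \<kappa>q_\<pi>[OF lift_in_c1 that] by (simp add: \<pi>_lift)
  then have "lift u \<in> perp \<kappa> c1"
    unfolding perp_def by blast
  then show ?thesis
    using \<pi>_c1_kernel lift_in_c1 \<pi>_lift by metis
qed

lemma quotient_invariant_form: "invariant_form scq brq \<kappa>q"
proof -
  have "\<kappa>q u v = \<kappa>q v u" for u v
    by (induct u rule: quotient_induct; induct v rule: quotient_induct;
        simp add: quotient_simps form_commute)
  moreover have "\<kappa>q (brq u v) w = \<kappa>q u (brq v w)" for u v w
    by (induct u rule: quotient_induct; induct v rule: quotient_induct;
        induct w rule: quotient_induct; simp add: quotient_simps form_invariant)
  ultimately show ?thesis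
    unfolding invariant_form_def using lin_functional_\<kappa>q \<kappa>q_nondegenerate by blast
qed

lemma quotient_fin_dim: "fin_dim_space scq"
proof (rule fin_dim_space_surj_image[OF finite_dim linear_\<pi>])
  show "surj \<pi>"
    using \<pi>_c1_surj by blast
qed

lemma quotient_factorizable: "factorizable scq brq \<kappa>q fq"
proof -
  have "fq (u + v) = fq u + fq v" "fq (scq c u) = scq c (fq u)"
    "\<kappa>q (fq u) v + \<kappa>q u (fq v) = \<kappa>q u v"
    "brq (fq u) (fq v) = fq (bracket_f brq fq u v)" for u v c
    by (induct u rule: quotient_induct; induct v rule: quotient_induct;
        simp add: quotient_simps bracket_f_def f.add f.scale f.diff f_plus_adjoint f_bracket)+
  then show ?thesis
    unfolding factorizable_def quadratic_lie_algebra_def Vector_Spaces.linear_iff bracket_f_def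
    using quotient_fin_dim quotient_lie_algebra quotient_invariant_form vector_space_quotient
    by blast
qed

sublocale quotient: factorizable_lie_bialgebra scq brq \<kappa>q fq
  by (rule factorizable_lie_bialgebra.intro[OF quotient_factorizable])

definition \<phi> :: "'g \<Rightarrow> 'q" where
  "\<phi> x = \<pi> (f x - x)"

lemma linear_\<phi>: "Vector_Spaces.linear sc scq \<phi>"
  using Vector_Spaces.linear_compose[OF linear_f_minus_id linear_\<pi>]
  unfolding \<phi>_def o_def .

lemma \<phi>_bracket_f: "\<phi> (bracket_f br f x y) = brq (\<phi> x) (\<phi> y)"
  unfolding \<phi>_def f_minus_id_bracket_f brq_\<pi>[OF f_minus_id_in_c1 f_minus_id_in_c1] ..

lemma riesz_comp_\<phi>:
  assumes \<alpha>: "lin_functional scq \<alpha>" and "c \<in> c1" and "quotient.riesz \<alpha> = \<pi> c"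
  shows "riesz (\<lambda>v. \<alpha> (\<phi> v)) = - f c"
proof (rule riesz_eqI)
  fix v
  have "\<alpha> (\<phi> v) = \<kappa>q (\<phi> v) (quotient.riesz \<alpha>)"
    by (rule quotient.lin_functional_riesz[OF \<alpha>])
  also have "\<dots> = \<kappa> (f v - v) c"
    unfolding assms(3) \<phi>_def by (rule \<kappa>q_\<pi>[OF f_minus_id_in_c1 assms(2)])
  also have "\<dots> = \<kappa> v (- f c)"
    by (simp add: form_f_minus_id form_neg_right)
  finally show "\<alpha> (\<phi> v) = \<kappa> v (- f c)" .
qed

lemma \<phi>_cobracket:
  assumes \<alpha>: "lin_functional scq \<alpha>" and \<beta>: "lin_functional scq \<beta>"
  shows "cop (cobracket_f sc br \<kappa>) x (\<lambda>v. \<alpha> (\<phi> v)) (\<lambda>v. \<beta> (\<phi> v))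
    = cobracket scq brq \<kappa>q fq (\<phi> x) \<alpha> \<beta>"
proof -
  obtain c d where c: "c \<in> c1" "quotient.riesz \<alpha> = \<pi> c" and d: "d \<in> c1" "quotient.riesz \<beta> = \<pi> d"
    using lift_in_c1 \<pi>_lift by metis
  have "cop (cobracket_f sc br \<kappa>) x (\<lambda>v. \<alpha> (\<phi> v)) (\<lambda>v. \<beta> (\<phi> v)) = - \<kappa> x (br (f c) (f d))"
    unfolding cop_def
    using cobracket_f_eq[OF lin_functional_comp[OF \<alpha> linear_\<phi>] lin_functional_comp[OF \<beta> linear_\<phi>]]
    by (simp add: riesz_comp_\<phi>[OF \<alpha> c] riesz_comp_\<phi>[OF \<beta> d] bracket_neg_left bracket_neg_right)
  also have "\<dots> = \<kappa> (f (br c (f x - x))) d + \<kappa> (br (f x - x) (f c)) d"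
    by (rule cobracket_identity[symmetric])
  also have "\<dots> = \<kappa>q (fq (brq (\<pi> c) (\<phi> x))) (\<pi> d) + \<kappa>q (brq (\<phi> x) (fq (\<pi> c))) (\<pi> d)"
    unfolding \<phi>_def using c d f_minus_id_in_c1
    by (simp add: brq_\<pi> fq_\<pi> \<kappa>q_\<pi> bracket_c1 f_image_c1)
  also have "\<dots> = cobracket scq brq \<kappa>q fq (\<phi> x) \<alpha> \<beta>"
    using quotient.cobracket_eq[OF \<alpha> \<beta>] quotient.lin_functional_riesz[OF \<beta>] c(2) d(2) by simp
  finally show ?thesis .
qed

lemma lie_bialg_hom_\<phi>:
  "lie_bialg_hom sc scq (bracket_f br f) (cop (cobracket_f sc br \<kappa>)) brq (cobracket scq brq \<kappa>q fq) \<phi>"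
  unfolding lie_bialg_hom_def using linear_\<phi> \<phi>_bracket_f \<phi>_cobracket by blast

lemma range_\<phi>: "range \<phi> = UNIV"
  using \<pi>_c1_surj unfolding c1_def \<phi>_def by (simp add: image_image)

lemma kernel_\<phi>: "{x. \<phi> x = 0} = {a + b | a b. f a = 0 \<and> f b = b}"
  unfolding kernel_plus_fixed_points \<phi>_def
  by (simp add: \<pi>_eq_0_iff f_minus_id_in_c1 f.diff)

end

theorem mainTheorem16:
  fixes sc :: "complex \<Rightarrow> 'g::ab_group_add \<Rightarrow> 'g"
    and br :: "'g \<Rightarrow> 'g \<Rightarrow> 'g" and \<kappa> :: "'g \<Rightarrow> 'g \<Rightarrow> complex" and f :: "'g \<Rightarrow> 'g"
    and scq :: "complex \<Rightarrow> 'q::ab_group_add \<Rightarrow> 'q" and \<pi> :: "'g \<Rightarrow> 'q"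
  defines "c1 \<equiv> range (\<lambda>x. f x - x)"
  assumes fact: "factorizable sc br \<kappa> f"
    and quot_vs: "vector_space scq"
    and quot_lin: "Vector_Spaces.linear sc scq \<pi>"
    and quot_surj: "\<pi> ` c1 = UNIV"
    and quot_ker: "\<forall>x\<in>c1. \<pi> x = 0 \<longleftrightarrow> x \<in> perp \<kappa> c1"
  shows "perp \<kappa> c1 = {x. f x = 0}
    \<and> f ` c1 \<subseteq> c1
    \<and> (\<forall>x\<in>c1. \<forall>y\<in>c1. br x y \<in> c1)
    \<and> (\<exists>brq \<kappa>q fq.
          (\<forall>x\<in>c1. \<forall>y\<in>c1. brq (\<pi> x) (\<pi> y) = \<pi> (br x y))
        \<and> (\<forall>x\<in>c1. \<forall>y\<in>c1. \<kappa>q (\<pi> x) (\<pi> y) = \<kappa> x y)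
        \<and> (\<forall>x\<in>c1. fq (\<pi> x) = \<pi> (f x))
        \<and> factorizable scq brq \<kappa>q fq
        \<and> lie_bialg_hom sc scq (bracket_f br f) (cop (cobracket_f sc br \<kappa>))
             brq (cobracket scq brq \<kappa>q fq) (\<lambda>x. \<pi> (f x - x))
        \<and> range (\<lambda>x. \<pi> (f x - x)) = UNIV
        \<and> {x. \<pi> (f x - x) = 0} = {a + b | a b. f a = 0 \<and> f b = b})"
proof -
  interpret g: factorizable_lie_bialgebra sc br \<kappa> f
    by (rule factorizable_lie_bialgebra.intro[OF fact])
  have c1_eq: "c1 = g.c1"
    unfolding c1_def g.c1_def ..
  interpret factorizable_quotient sc br \<kappa> f scq \<pi>
    using fact quot_vs quot_lin quot_surj quot_ker unfolding c1_eq
    by (intro factorizable_quotient.intro factorizable_quotient_axioms.intro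
        factorizable_lie_bialgebra.intro)
  have "\<forall>x\<in>c1. \<forall>y\<in>c1. brq (\<pi> x) (\<pi> y) = \<pi> (br x y)"
    and "\<forall>x\<in>c1. \<forall>y\<in>c1. \<kappa>q (\<pi> x) (\<pi> y) = \<kappa> x y"
    and "\<forall>x\<in>c1. fq (\<pi> x) = \<pi> (f x)"
    unfolding c1_eq by (simp_all add: brq_\<pi> \<kappa>q_\<pi> fq_\<pi>)
  moreover note quotient_factorizable lie_bialg_hom_\<phi> range_\<phi> kernel_\<phi>
  ultimately show ?thesis
    unfolding c1_eq \<phi>_def[abs_def] using g.perp_c1 g.f_image_c1 g.bracket_c1 by blast
qed

end
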